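(* Let $\mathcal{G}_N$ (the Newton group) be the group of transformations of $\mathbb{R}^4=\mathbb{R}^3\times\mathbb{R}$ of the form $(\mathbf{x},x^4)\mapsto(S\mathbf{x},x^4)+b$ with $S\in SO(3)$ and $b\in\mathbb{R}^4$. An equivalence relation on $\mathbb{R}^4$ is $\mathcal{G}_N$-invariant if and only if there is an additive subgroup $H$ of $\mathbb{R}$ such that either (i) the equivalence class of every $x$ is $[x]=x+(\{\mathbf{0}\}\times H)$, or (ii) the equivalence class of every $x$ is $[x]=x+(\mathbb{R}^3\times H)$.
   Context: An equivalence relation $\sim$ on $\mathbb{R}^4$ is $\mathcal{G}_N$-invariant if $x\sim y$ implies $g(x)\sim g(y)$ for all $x,y$ and all $g\in\mathcal{G}_N$. *)

theory Defs
  imports "HOL-Analysis.Analysis"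
begin

type_synonym pt4 = "(real^3) \<times> real"

definition SO3 :: "(real^3^3) set" where
  "SO3 = {S. orthogonal_matrix S \<and> det S = 1}"

definition newton_group :: "(pt4 \<Rightarrow> pt4) set" where
  "newton_group = {g. \<exists>S\<in>SO3. \<exists>b::pt4. \<forall>x::real^3. \<forall>t::real.
                        g (x, t) = (S *v x + fst b, t + snd b)}"

definition GN_invariant :: "pt4 rel \<Rightarrow> bool" where
  "GN_invariant R \<longleftrightarrow> (\<forall>x y. (x, y) \<in> R \<longrightarrow> (\<forall>g\<in>newton_group. (g x, g y) \<in> R))"

definition additive_subgroup :: "real set \<Rightarrow> bool" where
  "additive_subgroup H \<longleftrightarrow> 0 \<in> H \<and> (\<forall>a\<in>H. \<forall>b\<in>H. a + b \<in> H \<and> - a \<in> H)"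

end

theory Submission
  imports Defs
begin

text \<open>
  Invariance under translations makes the relation a coset decomposition modulo the additive
  subgroup \<open>K\<close>, the class of the origin. Invariance under rotations makes \<open>K\<close>
  rotation invariant: if \<open>K\<close> contains some \<open>(v, h)\<close> with \<open>v \<noteq> 0\<close>, then it contains
  \<open>(a, h) - (b, h) = (a - b, 0)\<close> for all \<open>a, b\<close> of norm \<open>\<parallel>v\<parallel>\<close>, hence every
  \<open>(u, 0)\<close> with \<open>\<parallel>u\<parallel> \<le> 2\<parallel>v\<parallel>\<close>, hence, adding such vectors, all of \<open>\<real>\<^sup>3 \<times> {0}\<close>.
  Thus \<open>K\<close> is either \<open>{0} \<times> H\<close> or \<open>\<real>\<^sup>3 \<times> H\<close>. Conversely, both kinds of coset
  decompositions are preserved by the Newton group.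
\<close>

definition add_subgroup :: "'a::group_add set \<Rightarrow> bool" where
  "add_subgroup K \<longleftrightarrow> 0 \<in> K \<and> (\<forall>a\<in>K. \<forall>b\<in>K. a + b \<in> K \<and> - a \<in> K)"

definition translation_invariant :: "'a::plus rel \<Rightarrow> bool" where
  "translation_invariant R \<longleftrightarrow> (\<forall>x y b. (x, y) \<in> R \<longrightarrow> (x + b, y + b) \<in> R)"

context
  fixes R :: "'a::ab_group_add rel"
  assumes transl: "translation_invariant R"
begin

lemma translation_invariant_shift: "(x, y) \<in> R \<Longrightarrow> (x + b, y + b) \<in> R"
  using transl unfolding translation_invariant_def by blast

lemma translation_invariant_in_rel_iff: "(x, y) \<in> R \<longleftrightarrow> y - x \<in> R `` {0}"
proof
  assume "(x, y) \<in> R"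
  then have "(x + - x, y + - x) \<in> R"
    by (rule translation_invariant_shift)
  then show "y - x \<in> R `` {0}"
    by simp
next
  assume "y - x \<in> R `` {0}"
  then have "(0 + x, (y - x) + x) \<in> R"
    by (intro translation_invariant_shift) simp
  then show "(x, y) \<in> R"
    by simp
qed

lemma translation_invariant_Image:
  "R `` {x} = {x + d | d. d \<in> R `` {0}}"
proof (intro set_eqI iffI)
  fix y
  assume "y \<in> R `` {x}"
  then have "y - x \<in> R `` {0}"
    using translation_invariant_in_rel_iff by blast
  then show "y \<in> {x + d | d. d \<in> R `` {0}}"
    by force
next
  fix y
  assume "y \<in> {x + d | d. d \<in> R `` {0}}"
  then obtain d where "y = x + d" "d \<in> R `` {0}"
    by blast
  then show "y \<in> R `` {x}"
    using translation_invariant_in_rel_iff[of x y] by simp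
qed

lemma translation_invariant_add_subgroup:
  assumes equiv: "equiv UNIV R"
  shows "add_subgroup (R `` {0})"
proof -
  have refl: "(x, x) \<in> R" for x
    using equiv unfolding equiv_def refl_on_def by blast
  have sym: "(x, y) \<in> R \<Longrightarrow> (y, x) \<in> R" for x y
    using equiv unfolding equiv_def sym_def by blast
  have trans: "(x, y) \<in> R \<Longrightarrow> (y, z) \<in> R \<Longrightarrow> (x, z) \<in> R" for x y z
    using equiv unfolding equiv_def trans_def by blast
  have add: "a + b \<in> R `` {0}" if "a \<in> R `` {0}" "b \<in> R `` {0}" for a b
  proof -
    have "(0 + a, b + a) \<in> R"
      using that(2) by (intro translation_invariant_shift) simp
    with that(1) show ?thesis by (auto simp: add.commute intro: trans)
  qed
  have uminus: "- a \<in> R `` {0}" if "a \<in> R `` {0}" for a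
  proof -
    have "(0 + - a, a + - a) \<in> R"
      using that by (intro translation_invariant_shift) simp
    then show ?thesis by (auto intro: sym)
  qed
  show ?thesis
    unfolding add_subgroup_def using refl add uminus by blast
qed

end

lemma add_closed_superset_cball_eq_UNIV:
  fixes K :: "'a::real_normed_vector set"
  assumes "0 \<in> K" and add: "\<And>a b. a \<in> K \<Longrightarrow> b \<in> K \<Longrightarrow> a + b \<in> K"
    and "cball 0 r \<subseteq> K" and "r > 0"
  shows "K = UNIV"
proof -
  have multiple: "real n *\<^sub>R a \<in> K" if "a \<in> K" for a n
    by (induction n) (use \<open>0 \<in> K\<close> add that in \<open>auto simp: algebra_simps\<close>)
  have "u \<in> K" for u
  proof -
    obtain n where n: "norm u / r < real n"
      using reals_Archimedean2 by blast
    with \<open>r > 0\<close> have "n > 0"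
      by (metis divide_nonneg_pos norm_ge_zero not_gr0 of_nat_0 order_le_less_trans less_irrefl)
    with n \<open>r > 0\<close> have "u /\<^sub>R real n \<in> cball 0 r"
      by (simp add: field_simps)
    with assms(3) have "real n *\<^sub>R (u /\<^sub>R real n) \<in> K"
      by (intro multiple) blast
    with \<open>n > 0\<close> show ?thesis
      by simp
  qed
  then show ?thesis by blast
qed

lemma diff_of_equal_norms_exists:
  fixes u :: "'a::euclidean_space"
  assumes "2 \<le> DIM('a)" and "norm u \<le> 2 * r"
  shows "\<exists>a b. norm a = r \<and> norm b = r \<and> a - b = u"
proof -
  obtain p where p: "p \<noteq> 0" "orthogonal u p"
    using orthogonal_to_vector_exists[OF assms(1)] by blast
  have "r \<ge> 0"
    using assms(2) norm_ge_zero[of u] by linarith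
  define q where "q = (sqrt (r\<^sup>2 - (norm u)\<^sup>2 / 4) / norm p) *\<^sub>R p"
  have "(norm u)\<^sup>2 \<le> (2 * r)\<^sup>2"
    using assms(2) norm_ge_zero power_mono by blast
  then have q2: "(norm q)\<^sup>2 = r\<^sup>2 - (norm u)\<^sup>2 / 4"
    using p(1) unfolding q_def by (simp add: power_mult_distrib)
  \<comment> \<open>\<open>\<pm>u/2 + q\<close> with \<open>q \<bottom> u\<close> and \<open>\<parallel>q\<parallel>\<^sup>2 = r\<^sup>2 - \<parallel>u\<parallel>\<^sup>2/4\<close> both have norm \<open>r\<close> by Pythagoras.\<close>
  have on_sphere: "norm (c *\<^sub>R u + q) = r" if "\<bar>c\<bar> = 1 / 2" for c
  proof -
    have "orthogonal (c *\<^sub>R u) q"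
      using p(2) unfolding q_def orthogonal_def by (simp add: inner_commute)
    moreover have "c\<^sup>2 = 1 / 4"
      using power2_abs[of c] that by (simp add: power2_eq_square)
    ultimately have "(norm (c *\<^sub>R u + q))\<^sup>2 = r\<^sup>2"
      using q2 by (simp add: norm_add_Pythagorean power_mult_distrib)
    with \<open>r \<ge> 0\<close> show ?thesis
      by (simp add: power2_eq_iff_nonneg)
  qed
  show ?thesis
  proof (intro exI conjI)
    show "norm ((1/2) *\<^sub>R u + q) = r" "norm ((- 1/2) *\<^sub>R u + q) = r"
      by (rule on_sphere; simp)+
    show "((1/2) *\<^sub>R u + q) - ((- 1/2) *\<^sub>R u + q) = u"
      by (simp add: algebra_simps scaleR_2[symmetric])
  qed
qed

lemma SO3_maps_to_equal_norm:
  fixes a b :: "real^3"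
  assumes "norm a = norm b"
  shows "\<exists>S\<in>SO3. S *v a = b"
proof -
  obtain f where f: "orthogonal_transformation f" "det (matrix f) = 1" "f a = b"
    using rotation_exists[of a b] assms by auto
  then have "orthogonal_matrix (matrix f)" "matrix f *v a = b"
    by (auto simp: orthogonal_transformation_matrix matrix_works)
  with f(2) show ?thesis
    unfolding SO3_def by blast
qed

lemma rotation_invariant_subgroup_cases:
  fixes K :: "pt4 set"
  assumes K: "add_subgroup K"
    and rot: "\<And>S v h. S \<in> SO3 \<Longrightarrow> (v, h) \<in> K \<Longrightarrow> (S *v v, h) \<in> K"
  shows "K = {(0, h) | h. (0, h) \<in> K} \<or> K = {(v, h) | v h. (0, h) \<in> K}"
proof (cases "\<exists>v h. v \<noteq> 0 \<and> (v, h) \<in> K")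
  case True
  then obtain v h where vh: "v \<noteq> 0" "(v, h) \<in> K"
    by blast
  have add: "a + b \<in> K" if "a \<in> K" "b \<in> K" for a b
    using K that unfolding add_subgroup_def by blast
  have uminus: "- a \<in> K" if "a \<in> K" for a
    using K that unfolding add_subgroup_def by blast
  have "cball 0 (2 * norm v) \<subseteq> {u. (u, 0) \<in> K}"
  proof
    fix u :: "real^3"
    assume "u \<in> cball 0 (2 * norm v)"
    then obtain a b where ab: "norm a = norm v" "norm b = norm v" "a - b = u"
      using diff_of_equal_norms_exists[of u "norm v"] by auto
    obtain S T where "S \<in> SO3" "S *v v = a" "T \<in> SO3" "T *v v = b"
      using SO3_maps_to_equal_norm ab by metis
    then have "(a, h) + - (b, h) \<in> K"
      using add uminus rot vh(2) by metis
    with ab(3) show "u \<in> {u. (u, 0) \<in> K}"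
      by simp
  qed
  then have horizontal: "(u, 0) \<in> K" for u
    using add_closed_superset_cball_eq_UNIV[of "{u. (u, 0) \<in> K}" "2 * norm v"] K vh(1) add
    unfolding add_subgroup_def by (force simp: zero_prod_def)
  have "(v, h) \<in> K \<longleftrightarrow> (0, h) \<in> K" for v h
    using add[of "(v, h)" "- (v, 0)"] add[of "(v, 0)" "(0, h)"] uminus horizontal by auto
  then have "K = {(v, h) | v h. (0, h) \<in> K}"
    by force
  then show ?thesis ..
next
  case False
  then show ?thesis
    by auto
qed

lemma additive_subgroup_fiber:
  fixes K :: "pt4 set"
  assumes "add_subgroup K"
  shows "additive_subgroup {h. (0, h) \<in> K}"
  using assms unfolding add_subgroup_def additive_subgroup_def
  by (metis (mono_tags, lifting) add_Pair add_0 mem_Collect_eq uminus_Pair neg_0_equal_iff_equal zero_prod_def)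

lemma translation_in_newton_group: "(\<lambda>p. p + b) \<in> newton_group"
proof -
  have "mat 1 \<in> SO3"
    by (simp add: SO3_def orthogonal_matrix_id det_I)
  then show ?thesis
    unfolding newton_group_def by (cases b) (auto intro!: bexI[of _ "mat 1"])
qed

lemma rotation_in_newton_group: "S \<in> SO3 \<Longrightarrow> (\<lambda>(v, h). (S *v v, h)) \<in> newton_group"
  unfolding newton_group_def by (auto intro!: bexI[of _ S] exI[of _ "(0, 0)"])

lemma newton_group_add:
  assumes "g \<in> newton_group"
  obtains S where "S \<in> SO3" "\<And>x v h. g (x + (v, h)) = g x + (S *v v, h)"
proof -
  obtain S b where "S \<in> SO3" and g: "\<And>x t. g (x, t) = (S *v x + fst b, t + snd b)"
    using assms unfolding newton_group_def by blast
  have "g (x + (v, h)) = g x + (S *v v, h)" for x v h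
    using g[of "fst x + v" "snd x + h"] g[of "fst x" "snd x"]
    by (cases x) (simp add: matrix_vector_right_distrib algebra_simps)
  with \<open>S \<in> SO3\<close> show thesis
    using that by blast
qed

lemma GN_invariant_translation_invariant:
  "GN_invariant R \<Longrightarrow> translation_invariant R"
  using translation_in_newton_group
  unfolding GN_invariant_def translation_invariant_def by fastforce

lemma GN_invariant_rotation_class:
  assumes "GN_invariant R" "S \<in> SO3" "(v, h) \<in> R `` {0}"
  shows "(S *v v, h) \<in> R `` {0}"
  using assms rotation_in_newton_group[OF assms(2)]
  unfolding GN_invariant_def by (fastforce simp: zero_prod_def)

lemma GN_invariant_if_classes:
  fixes R :: "pt4 rel"
  assumes classes: "\<And>x. R `` {x} = {x + d | d. d \<in> K}"
    and rot: "\<And>S v h. S \<in> SO3 \<Longrightarrow> (v, h) \<in> K \<Longrightarrow> (S *v v, h) \<in> K"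
  shows "GN_invariant R"
  unfolding GN_invariant_def
proof (intro allI impI ballI)
  fix x y g
  assume "(x, y) \<in> R" "g \<in> newton_group"
  then obtain v h where "y = x + (v, h)" "(v, h) \<in> K"
    using classes[of x] by fastforce
  moreover obtain S where "S \<in> SO3" "\<And>x v h. g (x + (v, h)) = g x + (S *v v, h)"
    using newton_group_add[OF \<open>g \<in> newton_group\<close>] by blast
  ultimately have "g y \<in> R `` {g x}"
    using classes[of "g x"] rot by auto
  then show "(g x, g y) \<in> R"
    by simp
qed

lemma GN_invariant_if_coset_classes:
  fixes R :: "pt4 rel"
  assumes "(\<forall>x. R `` {x} = {x + (0, h) | h. h \<in> H}) \<or> (\<forall>x. R `` {x} = {x + (v, h) | v h. h \<in> H})"
  shows "GN_invariant R"
  using assms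
proof
  assume "\<forall>x. R `` {x} = {x + (0, h) | h. h \<in> H}"
  then have "R `` {x} = {x + d | d. d \<in> {(0, h) | h. h \<in> H}}" for x
    by blast
  then show ?thesis
    by (rule GN_invariant_if_classes) auto
next
  assume "\<forall>x. R `` {x} = {x + (v, h) | v h. h \<in> H}"
  then have "R `` {x} = {x + d | d. d \<in> {(v, h) | v h. h \<in> H}}" for x
    by blast
  then show ?thesis
    by (rule GN_invariant_if_classes) auto
qed

theorem theorem3p3:
  fixes R :: "pt4 rel"
  assumes "equiv UNIV R"
  shows "GN_invariant R \<longleftrightarrow>
    (\<exists>H. additive_subgroup H \<and>
      ((\<forall>x. R `` {x} = {x + (0, h) | h. h \<in> H}) \<or>
       (\<forall>x. R `` {x} = {x + (v, h) | v h. h \<in> H})))"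
    (is "_ \<longleftrightarrow> (\<exists>H. additive_subgroup H \<and> ?cosets H)")
proof
  assume inv: "GN_invariant R"
  define K where "K = R `` {0}"
  define H where "H = {h. (0, h) \<in> K}"
  have transl: "translation_invariant R"
    using inv by (rule GN_invariant_translation_invariant)
  have "add_subgroup K"
    unfolding K_def using transl assms by (rule translation_invariant_add_subgroup)
  then have "additive_subgroup H"
    unfolding H_def by (rule additive_subgroup_fiber)
  have "K = {(0, h) | h. h \<in> H} \<or> K = {(v, h) | v h. h \<in> H}"
    using rotation_invariant_subgroup_cases \<open>add_subgroup K\<close> GN_invariant_rotation_class[OF inv]
    unfolding H_def K_def by blast
  moreover have "R `` {x} = {x + d | d. d \<in> K}" for x
    unfolding K_def using transl by (rule translation_invariant_Image)
  ultimately have "?cosets H"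
    by auto
  with \<open>additive_subgroup H\<close> show "\<exists>H. additive_subgroup H \<and> ?cosets H"
    by blast
qed (blast intro: GN_invariant_if_coset_classes)

end
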